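(* Suppose either (1) $X=\mathbb{R}^n$ with the coordinatewise (weak vector dominance) order, or (2) $X=\Delta([a,b])$, the set of Borel probability measures on a real interval $[a,b]$ with the weak* topology, ordered by weak first-order stochastic dominance. Then $X$ has the squeezing property, and there is a sequence of experiments $\{B_i\}_{i\in\mathbb{N}}$ in $X$ such that $(X,\{B_i\})$ has the countable order property.
   Context: First-order stochastic dominance: $x\ge y$ iff $\int f\,dx\ge\int f\,dy$ for all bounded continuous increasing $f$ on $[a,b]$. A sequence of experiments is a sequence $\{B_i\}$ of unordered pairs $B_i\subseteq X$ such that $B=\bigcup_iB_i$ is dense in $X$ and for all $x,y\in B$ there is $k$ with $B_k=\{x,y\}$. Countable order property: for each $x\in X$ and each neighborhood $V$ of $x$ there are $x',x''\in B\cap V$ with $x'\le x\le x''$. Squeezing property: for every sequence $x_n\to x^*$ in $X$ there are an increasing sequence $(x'_n)$ and a decreasing sequence $(x''_n)$ with $x'_n\le x_n\le x''_n$ and $x'_n\to x^*$, $x''_n\to x^*$. *)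

theory Defs
  imports "HOL-Probability.Probability"
begin

definition sequence_of_experiments :: "'a topology \<Rightarrow> (nat \<Rightarrow> 'a set) \<Rightarrow> bool" where
  "sequence_of_experiments T Bs \<longleftrightarrow>
     (\<forall>i. \<exists>x y. x \<in> topspace T \<and> y \<in> topspace T \<and> Bs i = {x, y}) \<and>
     T closure_of (\<Union>i. Bs i) = topspace T \<and>
     (\<forall>x \<in> (\<Union>i. Bs i). \<forall>y \<in> (\<Union>i. Bs i). \<exists>k. Bs k = {x, y})"

definition countable_order_property ::
    "'a topology \<Rightarrow> ('a \<Rightarrow> 'a \<Rightarrow> bool) \<Rightarrow> (nat \<Rightarrow> 'a set) \<Rightarrow> bool" where
  "countable_order_property T le Bs \<longleftrightarrow>
     (\<forall>x \<in> topspace T. \<forall>V. openin T V \<and> x \<in> V \<longrightarrow>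
        (\<exists>x' \<in> (\<Union>i. Bs i) \<inter> V. \<exists>x'' \<in> (\<Union>i. Bs i) \<inter> V. le x' x \<and> le x x''))"

definition squeezing_property :: "'a topology \<Rightarrow> ('a \<Rightarrow> 'a \<Rightarrow> bool) \<Rightarrow> bool" where
  "squeezing_property T le \<longleftrightarrow>
     (\<forall>xs xstar. (\<forall>n. xs n \<in> topspace T) \<and> xstar \<in> topspace T \<and>
                 limitin T xs xstar sequentially \<longrightarrow>
        (\<exists>lo hi. (\<forall>n. lo n \<in> topspace T \<and> hi n \<in> topspace T) \<and>
                 (\<forall>n. le (lo n) (lo (Suc n))) \<and> (\<forall>n. le (hi (Suc n)) (hi n)) \<and>
                 (\<forall>n. le (lo n) (xs n) \<and> le (xs n) (hi n)) \<and>
                 limitin T lo xstar sequentially \<and> limitin T hi xstar sequentially))"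

definition coord_le :: "real^'n \<Rightarrow> real^'n \<Rightarrow> bool" where
  "coord_le x y \<longleftrightarrow> (\<forall>i. x $ i \<le> y $ i)"

definition prob_measures_on :: "real \<Rightarrow> real \<Rightarrow> real measure set" where
  "prob_measures_on a b =
     {M. prob_space M \<and> sets M = sets (restrict_space borel {a..b})}"

definition weak_star_topology :: "real \<Rightarrow> real \<Rightarrow> real measure topology" where
  "weak_star_topology a b =
     topology_generated_by
       {{M \<in> prob_measures_on a b. (\<integral>t. f t \<partial>M) \<in> U} | f U.
          continuous_on {a..b} f \<and> open (U :: real set)}"

definition fosd_le :: "real \<Rightarrow> real \<Rightarrow> real measure \<Rightarrow> real measure \<Rightarrow> bool" where
  "fosd_le a b y x \<longleftrightarrow>
     (\<forall>f :: real \<Rightarrow> real. continuous_on {a..b} f \<and> mono_on {a..b} f \<longrightarrow>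
        (\<integral>t. f t \<partial>y) \<le> (\<integral>t. f t \<partial>x))"

end

theory Submission
  imports Defs
begin

(* Both orders are handled the same way: tail infima and suprema squeeze a convergent sequence,
   and a countable set approximates every point from below and from above. In R^n this is done
   coordinatewise, with the rational vectors as the countable set. For measures on [a,b] everything
   is transported to random variables on a common probability space: pointwise g <= h gives
   stochastic dominance of the laws, and almost sure convergence gives weak* convergence.
   Skorohod's representation turns weak* convergence into almost sure convergence. The countable
   set consists of the laws of step functions on (0,1) with values on the grid of mesh 1/N:
   rounding the quantile function of a measure down (up) on that grid gives laws below (above) it,
   and they converge to it because a monotone function is continuous almost everywhere. *)

section \<open>Sequences of experiments from countable order-dense sets\<close>

lemma experiments_from_countable_order_dense:
  assumes "countable B" "B \<noteq> {}" "B \<subseteq> topspace T"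
    and order_dense: "\<And>x V. x \<in> topspace T \<Longrightarrow> openin T V \<Longrightarrow> x \<in> V \<Longrightarrow>
                        (\<exists>y \<in> B \<inter> V. le y x) \<and> (\<exists>z \<in> B \<inter> V. le x z)"
  shows "\<exists>Bs. sequence_of_experiments T Bs \<and> countable_order_property T le Bs"
proof -
  define e where "e = from_nat_into (B \<times> B)"
  have range_e: "range e = B \<times> B"
    unfolding e_def using assms(1,2) by simp
  then have e_in: "fst (e i) \<in> B" "snd (e i) \<in> B" for i
    by (metis mem_Sigma_iff prod.collapse rangeI)+
  define Bs where "Bs i = {fst (e i), snd (e i)}" for i
  have pair: "\<exists>k. Bs k = {x, y}" if "x \<in> B" "y \<in> B" for x y
  proof -
    from that range_e obtain k where "e k = (x, y)" by (metis mem_Sigma_iff rangeE)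
    then show ?thesis unfolding Bs_def by (intro exI[of _ k]) auto
  qed
  have union: "(\<Union>i. Bs i) = B"
  proof
    show "(\<Union>i. Bs i) \<subseteq> B"
      using e_in unfolding Bs_def by blast
    show "B \<subseteq> (\<Union>i. Bs i)"
    proof
      fix x assume "x \<in> B"
      with pair obtain k where "Bs k = {x}" by fastforce
      then show "x \<in> (\<Union>i. Bs i)" by blast
    qed
  qed
  have "sequence_of_experiments T Bs"
    unfolding sequence_of_experiments_def union
  proof (intro conjI allI ballI pair)
    show "\<exists>x y. x \<in> topspace T \<and> y \<in> topspace T \<and> Bs i = {x, y}" for i
      using e_in assms(3) unfolding Bs_def by blast
    show "T closure_of B = topspace T"
      using order_dense assms(3) by (fastforce simp: closure_of_def)
  qed
  moreover have "countable_order_property T le Bs"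
    unfolding countable_order_property_def union using order_dense by blast
  ultimately show ?thesis by blast
qed

section \<open>Euclidean space with the coordinatewise order\<close>

lemma tail_INF_squeeze:
  fixes X :: "nat \<Rightarrow> real"
  assumes "X \<longlonglongrightarrow> L"
  shows "incseq (\<lambda>n. INF m\<in>{n..}. X m)" "(INF m\<in>{n..}. X m) \<le> X n"
    "(\<lambda>n. INF m\<in>{n..}. X m) \<longlonglongrightarrow> L"
proof -
  have "bounded (range X)"
    using assms by (simp add: convergent_imp_bounded)
  then have bdd: "bdd_below (X ` {n..})" for n
    by (auto intro: bdd_below_mono[OF bounded_imp_bdd_below])
  show "incseq (\<lambda>n. INF m\<in>{n..}. X m)"
    by (intro monoI cINF_superset_mono) (auto intro: bdd)
  show lower: "(INF m\<in>{n..}. X m) \<le> X n" for n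
    by (rule cINF_lower[OF bdd]) simp
  show "(\<lambda>n. INF m\<in>{n..}. X m) \<longlonglongrightarrow> L"
  proof (rule order_tendstoI)
    fix c assume "c < L"
    then obtain c' where "c < c'" "c' < L" using dense by blast
    then have "eventually (\<lambda>n. \<forall>m\<ge>n. c' < X m) sequentially"
      using assms by (intro eventually_all_ge_at_top) (simp add: order_tendstoD)
    then show "eventually (\<lambda>n. c < (INF m\<in>{n..}. X m)) sequentially"
      by (rule eventually_mono)
        (use \<open>c < c'\<close> in \<open>auto intro!: less_le_trans[OF _ cINF_greatest]\<close>)
  next
    fix c assume "L < c"
    with assms have "eventually (\<lambda>n. X n < c) sequentially" by (rule order_tendstoD)
    then show "eventually (\<lambda>n. (INF m\<in>{n..}. X m) < c) sequentially"
      by (rule eventually_mono) (auto intro: le_less_trans[OF lower])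
  qed
qed

lemma tail_SUP_squeeze:
  fixes X :: "nat \<Rightarrow> real"
  assumes "X \<longlonglongrightarrow> L"
  shows "decseq (\<lambda>n. SUP m\<in>{n..}. X m)" "X n \<le> (SUP m\<in>{n..}. X m)"
    "(\<lambda>n. SUP m\<in>{n..}. X m) \<longlonglongrightarrow> L"
proof -
  have "(\<lambda>n. - X n) \<longlonglongrightarrow> - L"
    using assms by (rule tendsto_minus)
  note inf = tail_INF_squeeze[OF this]
  have neg: "(SUP m\<in>{n..}. X m) = - (INF m\<in>{n..}. - X m)" for n
    by (simp add: Inf_real_def image_image)
  show "decseq (\<lambda>n. SUP m\<in>{n..}. X m)" "X n \<le> (SUP m\<in>{n..}. X m)"
    "(\<lambda>n. SUP m\<in>{n..}. X m) \<longlonglongrightarrow> L"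
    using inf(1) inf(2)[of n] tendsto_minus[OF inf(3)] unfolding neg
    by (auto simp: incseq_def decseq_def)
qed

lemma rat_below_in_open:
  fixes A :: "real set"
  assumes "open A" "x \<in> A"
  obtains q :: rat where "of_rat q \<in> A" "of_rat q \<le> x"
proof -
  obtain e where "e > 0" "ball x e \<subseteq> A"
    using assms open_contains_ball by blast
  moreover obtain q where "x - e < of_rat q" "of_rat q < x"
    using of_rat_dense[of "x - e" x] \<open>e > 0\<close> by auto
  ultimately show ?thesis
    using that[of q] by (auto simp: dist_real_def subset_iff)
qed

lemma rat_above_in_open:
  fixes A :: "real set"
  assumes "open A" "x \<in> A"
  obtains q :: rat where "of_rat q \<in> A" "x \<le> of_rat q"
proof -
  obtain e where "e > 0" "ball x e \<subseteq> A"
    using assms open_contains_ball by blast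
  moreover obtain q where "x < of_rat q" "of_rat q < x + e"
    using of_rat_dense[of x "x + e"] \<open>e > 0\<close> by auto
  ultimately show ?thesis
    using that[of q] by (auto simp: dist_real_def subset_iff)
qed

lemma squeezing_property_coord_le: "squeezing_property (euclidean :: (real^'n) topology) coord_le"
  unfolding squeezing_property_def
proof (intro allI impI)
  fix xs :: "nat \<Rightarrow> real^'n" and x
  assume "(\<forall>n. xs n \<in> topspace euclidean) \<and> x \<in> topspace euclidean \<and>
    limitin euclidean xs x sequentially"
  then have "(\<lambda>n. xs n $ i) \<longlonglongrightarrow> x $ i" for i
    by (auto intro: tendsto_vec_nth)
  note inf = tail_INF_squeeze[OF this] and sup = tail_SUP_squeeze[OF this]
  define lo where "lo n = (\<chi> i. INF m\<in>{n..}. xs m $ i)" for n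
  define hi where "hi n = (\<chi> i. SUP m\<in>{n..}. xs m $ i)" for n
  have "coord_le (lo n) (lo (Suc n))" "coord_le (hi (Suc n)) (hi n)"
    "coord_le (lo n) (xs n)" "coord_le (xs n) (hi n)" for n
    unfolding coord_le_def lo_def hi_def
    using incseq_SucD[OF inf(1)] decseq_SucD[OF sup(1)] inf(2) sup(2) by auto
  moreover have "lo \<longlonglongrightarrow> x" "hi \<longlonglongrightarrow> x"
    unfolding lo_def hi_def using inf(3) sup(3) by (auto intro: vec_tendstoI)
  ultimately show "\<exists>lo hi. (\<forall>n. lo n \<in> topspace euclidean \<and> hi n \<in> topspace euclidean) \<and>
      (\<forall>n. coord_le (lo n) (lo (Suc n))) \<and> (\<forall>n. coord_le (hi (Suc n)) (hi n)) \<and>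
      (\<forall>n. coord_le (lo n) (xs n) \<and> coord_le (xs n) (hi n)) \<and>
      limitin euclidean lo x sequentially \<and> limitin euclidean hi x sequentially"
    by (intro exI[of _ lo] exI[of _ hi]) auto
qed

lemma coord_le_order_dense_rat_vectors:
  fixes x :: "real^'n"
  assumes "open V" "x \<in> V"
  shows "\<exists>y \<in> range (\<lambda>g. \<chi> i. of_rat (g i)) \<inter> V. coord_le y x"
    and "\<exists>z \<in> range (\<lambda>g. \<chi> i. of_rat (g i)) \<inter> V. coord_le x z"
proof -
  obtain A where A: "\<And>i. open (A i)" "\<And>i. x $ i \<in> A i"
    and box: "\<And>y. \<forall>i. y $ i \<in> A i \<Longrightarrow> y \<in> V"
    using assms unfolding open_vec_def by metis
  have "\<forall>i. \<exists>q. of_rat q \<in> A i \<and> of_rat q \<le> x $ i"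
    by (metis A rat_below_in_open)
  then obtain g where "\<And>i. of_rat (g i) \<in> A i" "\<And>i. of_rat (g i) \<le> x $ i"
    by metis
  then show "\<exists>y \<in> range (\<lambda>g. \<chi> i. of_rat (g i)) \<inter> V. coord_le y x"
    using box by (intro bexI[of _ "\<chi> i. of_rat (g i)"]) (auto simp: coord_le_def)
  have "\<forall>i. \<exists>q. of_rat q \<in> A i \<and> x $ i \<le> of_rat q"
    by (metis A rat_above_in_open)
  then obtain h where "\<And>i. of_rat (h i) \<in> A i" "\<And>i. x $ i \<le> of_rat (h i)"
    by metis
  then show "\<exists>z \<in> range (\<lambda>g. \<chi> i. of_rat (g i)) \<inter> V. coord_le x z"
    using box by (intro bexI[of _ "\<chi> i. of_rat (h i)"]) (auto simp: coord_le_def)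
qed

lemma countable_order_property_coord_le:
  "\<exists>Bs. sequence_of_experiments (euclidean :: (real^'n) topology) Bs \<and>
        countable_order_property euclidean coord_le Bs"
  by (rule experiments_from_countable_order_dense[of "range (\<lambda>g. \<chi> i. of_rat (g i))"])
    (auto simp: coord_le_order_dense_rat_vectors)

section \<open>Probability measures on an interval\<close>

lemma topspace_weak_star_topology [simp]:
  "topspace (weak_star_topology a b) = prob_measures_on a b"
proof -
  have "prob_measures_on a b \<in> {{M \<in> prob_measures_on a b. (\<integral>t. f t \<partial>M) \<in> U} | f U.
          continuous_on {a..b} f \<and> open (U :: real set)}"
    by (rule CollectI, rule exI[of _ "\<lambda>_. 0"], rule exI[of _ UNIV]) auto
  then show ?thesis unfolding weak_star_topology_def by auto
qed

lemma limitin_topology_generated_by: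
  assumes "l \<in> \<Union>S"
    and "\<And>U. U \<in> S \<Longrightarrow> l \<in> U \<Longrightarrow> eventually (\<lambda>n. x n \<in> U) F"
  shows "limitin (topology_generated_by S) x l F"
proof -
  have "eventually (\<lambda>n. x n \<in> U) F" if "generate_topology_on S U" "l \<in> U" for U
    using that
  proof (induction rule: generate_topology_on.induct)
    case (UN K)
    then obtain k where "k \<in> K" "l \<in> k" by auto
    with UN.IH have "eventually (\<lambda>n. x n \<in> k) F" by auto
    then show ?case by (rule eventually_mono) (use \<open>k \<in> K\<close> in auto)
  qed (use assms(2) in \<open>auto intro: eventually_conj\<close>)
  then show ?thesis
    using assms(1) by (auto simp: limitin_def openin_topology_generated_by_iff)
qed

lemma limitin_weak_star_topologyI:
  assumes "\<mu> \<in> prob_measures_on a b" "\<And>n. \<mu>s n \<in> prob_measures_on a b"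
    and "\<And>f :: real \<Rightarrow> real. continuous_on {a..b} f \<Longrightarrow>
           (\<lambda>n. \<integral>t. f t \<partial>\<mu>s n) \<longlonglongrightarrow> (\<integral>t. f t \<partial>\<mu>)"
  shows "limitin (weak_star_topology a b) \<mu>s \<mu> sequentially"
  unfolding weak_star_topology_def
proof (rule limitin_topology_generated_by)
  show "\<mu> \<in> \<Union>{{M \<in> prob_measures_on a b. (\<integral>t. f t \<partial>M) \<in> U} | f U.
          continuous_on {a..b} f \<and> open (U :: real set)}"
    using assms(1) topspace_weak_star_topology[of a b] unfolding weak_star_topology_def by simp
next
  fix U assume "U \<in> {{M \<in> prob_measures_on a b. (\<integral>t. f t \<partial>M) \<in> U} | f U.
          continuous_on {a..b} f \<and> open (U :: real set)}" "\<mu> \<in> U"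
  then obtain f :: "real \<Rightarrow> real" and W where U: "U = {M \<in> prob_measures_on a b. (\<integral>t. f t \<partial>M) \<in> W}"
    and "continuous_on {a..b} f" "open W"
    unfolding mem_Collect_eq by blast
  moreover have "(\<integral>t. f t \<partial>\<mu>) \<in> W"
    using \<open>\<mu> \<in> U\<close> U by simp
  ultimately have "eventually (\<lambda>n. (\<integral>t. f t \<partial>\<mu>s n) \<in> W) sequentially"
    using assms(3) topological_tendstoD by blast
  then show "eventually (\<lambda>n. \<mu>s n \<in> U) sequentially"
    by (rule eventually_mono) (simp add: U assms(2))
qed

lemma limitin_weak_star_topologyD:
  fixes f :: "real \<Rightarrow> real"
  assumes "limitin (weak_star_topology a b) \<mu>s \<mu> sequentially" "continuous_on {a..b} f"
  shows "(\<lambda>n. \<integral>t. f t \<partial>\<mu>s n) \<longlonglongrightarrow> (\<integral>t. f t \<partial>\<mu>)"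
proof (rule topological_tendstoI)
  fix W assume W: "open W" "(\<integral>t. f t \<partial>\<mu>) \<in> W"
  let ?U = "{M \<in> prob_measures_on a b. (\<integral>t. f t \<partial>M) \<in> W}"
  have "openin (weak_star_topology a b) ?U"
    unfolding weak_star_topology_def
    by (rule topology_generated_by_Basis, rule CollectI, rule exI[of _ f], rule exI[of _ W])
      (simp add: assms(2) W(1))
  moreover have "\<mu> \<in> ?U"
    using assms(1) W(2) by (simp add: limitin_def)
  ultimately have "eventually (\<lambda>n. \<mu>s n \<in> ?U) sequentially"
    using assms(1) unfolding limitin_def by blast
  then show "eventually (\<lambda>n. (\<integral>t. f t \<partial>\<mu>s n) \<in> W) sequentially"
    by (rule eventually_mono) simp
qed

lemma
  assumes "\<mu> \<in> prob_measures_on a b"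
  shows space_prob_measures_on: "space \<mu> = {a..b}"
    and measurable_id_prob_measures_on: "(\<lambda>x. x) \<in> borel_measurable \<mu>"
proof -
  have sets: "sets \<mu> = sets (restrict_space borel {a..b})"
    using assms by (simp add: prob_measures_on_def)
  from sets_eq_imp_space_eq[OF this] show "space \<mu> = {a..b}"
    by (simp add: space_restrict_space)
  show "(\<lambda>x. x) \<in> borel_measurable \<mu>"
    unfolding measurable_cong_sets[OF sets refl]
    by (rule borel_measurable_continuous_on_restrict[OF continuous_on_id])
qed

lemma real_distribution_prob_measures_on:
  "\<mu> \<in> prob_measures_on a b \<Longrightarrow> real_distribution (distr \<mu> borel (\<lambda>x. x))"
  unfolding real_distribution_def real_distribution_axioms_def
  using prob_space.prob_space_distr[OF _ measurable_id_prob_measures_on]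
  by (auto simp: prob_measures_on_def)

lemma integral_distr_prob_measures_on:
  fixes h :: "real \<Rightarrow> real"
  assumes "\<mu> \<in> prob_measures_on a b" "h \<in> borel_measurable borel"
  shows "(\<integral>x. h x \<partial>distr \<mu> borel (\<lambda>x. x)) = (\<integral>x. h x \<partial>\<mu>)"
  using integral_distr[OF measurable_id_prob_measures_on[OF assms(1)] assms(2)] by simp

lemma borel_measurable_continuous_on_Icc_comp:
  assumes "g \<in> borel_measurable \<Omega>" "\<And>\<omega>. \<omega> \<in> space \<Omega> \<Longrightarrow> g \<omega> \<in> {a..b}"
    and "continuous_on {a..b} f"
  shows "(\<lambda>\<omega>. f (g \<omega>)) \<in> borel_measurable \<Omega>"
proof -
  have "g \<in> measurable \<Omega> (restrict_space borel {a..b})"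
    using assms(1,2) by (intro measurable_restrict_space2) auto
  from measurable_comp[OF this borel_measurable_continuous_on_restrict[OF assms(3)]]
  show ?thesis by (simp add: comp_def)
qed

lemma bounded_continuous_on_Icc:
  fixes f :: "real \<Rightarrow> real"
  assumes "continuous_on {a..b} f"
  obtains K where "\<And>x. x \<in> {a..b} \<Longrightarrow> \<bar>f x\<bar> \<le> K"
proof -
  have "bounded (f ` {a..b})"
    by (rule compact_imp_bounded[OF compact_continuous_image[OF assms compact_Icc]])
  then obtain K where "\<forall>y \<in> f ` {a..b}. \<bar>y\<bar> \<le> K"
    by (auto simp: bounded_iff)
  then show ?thesis by (intro that[of K]) auto
qed

lemma integrable_continuous_on_Icc_comp:
  fixes f :: "real \<Rightarrow> real"
  assumes "finite_measure \<Omega>" "g \<in> borel_measurable \<Omega>" "\<And>\<omega>. \<omega> \<in> space \<Omega> \<Longrightarrow> g \<omega> \<in> {a..b}"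
    and "continuous_on {a..b} f"
  shows "integrable \<Omega> (\<lambda>\<omega>. f (g \<omega>))"
proof -
  obtain K where "\<And>x. x \<in> {a..b} \<Longrightarrow> \<bar>f x\<bar> \<le> K"
    using bounded_continuous_on_Icc[OF assms(4)] by blast
  then have "AE \<omega> in \<Omega>. norm (f (g \<omega>)) \<le> K"
    using assms(3) by (intro AE_I2) simp
  then show ?thesis
    by (rule finite_measure.integrable_const_bound[OF assms(1)])
      (rule borel_measurable_continuous_on_Icc_comp[OF assms(2-4)])
qed

(* g, read as a random variable on \<Omega>, has law \<mu>. Only integrals of functions continuous on
   [a,b] are compared, since these are all that fosd_le and the weak* topology see. *)
definition represents :: "real \<Rightarrow> real \<Rightarrow> real measure \<Rightarrow> (real \<Rightarrow> real) \<Rightarrow> real measure \<Rightarrow> bool"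
  where "represents a b \<Omega> g \<mu> \<longleftrightarrow>
    g \<in> borel_measurable \<Omega> \<and> (\<forall>\<omega> \<in> space \<Omega>. g \<omega> \<in> {a..b}) \<and>
    (\<forall>f :: real \<Rightarrow> real. continuous_on {a..b} f \<longrightarrow> (\<integral>t. f t \<partial>\<mu>) = (\<integral>\<omega>. f (g \<omega>) \<partial>\<Omega>))"

lemma representsD:
  assumes "represents a b \<Omega> g \<mu>"
  shows "g \<in> borel_measurable \<Omega>" "\<And>\<omega>. \<omega> \<in> space \<Omega> \<Longrightarrow> g \<omega> \<in> {a..b}"
    and "\<And>f :: real \<Rightarrow> real. continuous_on {a..b} f \<Longrightarrow> (\<integral>t. f t \<partial>\<mu>) = (\<integral>\<omega>. f (g \<omega>) \<partial>\<Omega>)"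
  using assms unfolding represents_def by auto

lemma represents_cong:
  assumes "represents a b \<Omega> g \<mu>" "\<And>\<omega>. \<omega> \<in> space \<Omega> \<Longrightarrow> g \<omega> = h \<omega>"
  shows "represents a b \<Omega> h \<mu>"
  using assms unfolding represents_def
  by (auto cong: measurable_cong Bochner_Integration.integral_cong)

definition law :: "real \<Rightarrow> real \<Rightarrow> real measure \<Rightarrow> (real \<Rightarrow> real) \<Rightarrow> real measure"
  where "law a b \<Omega> g = distr \<Omega> (restrict_space borel {a..b}) g"

lemma
  assumes "prob_space \<Omega>" "g \<in> borel_measurable \<Omega>" "\<And>\<omega>. \<omega> \<in> space \<Omega> \<Longrightarrow> g \<omega> \<in> {a..b}"
  shows law_in_prob_measures_on: "law a b \<Omega> g \<in> prob_measures_on a b"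
    and represents_law: "represents a b \<Omega> g (law a b \<Omega> g)"
proof -
  have g: "g \<in> measurable \<Omega> (restrict_space borel {a..b})"
    using assms(2,3) by (intro measurable_restrict_space2) auto
  show "law a b \<Omega> g \<in> prob_measures_on a b"
    unfolding law_def prob_measures_on_def using prob_space.prob_space_distr[OF assms(1) g] by simp
  show "represents a b \<Omega> g (law a b \<Omega> g)"
    unfolding represents_def law_def using assms(2,3)
    by (auto intro!: integral_distr g borel_measurable_continuous_on_restrict)
qed

lemma fosd_le_if_represents_le:
  assumes "prob_space \<Omega>" "represents a b \<Omega> g \<mu>" "represents a b \<Omega> h \<nu>"
    and "\<And>\<omega>. \<omega> \<in> space \<Omega> \<Longrightarrow> g \<omega> \<le> h \<omega>"
  shows "fosd_le a b \<mu> \<nu>"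
  unfolding fosd_le_def
proof (intro allI impI)
  fix f :: "real \<Rightarrow> real" assume f: "continuous_on {a..b} f \<and> mono_on {a..b} f"
  note g = representsD[OF assms(2)] and h = representsD[OF assms(3)]
  have "(\<integral>\<omega>. f (g \<omega>) \<partial>\<Omega>) \<le> (\<integral>\<omega>. f (h \<omega>) \<partial>\<Omega>)"
  proof (rule integral_mono)
    have "finite_measure \<Omega>"
      using assms(1) by (simp add: prob_space_def)
    then show "integrable \<Omega> (\<lambda>\<omega>. f (g \<omega>))" "integrable \<Omega> (\<lambda>\<omega>. f (h \<omega>))"
      using g(1,2) h(1,2) f by (blast intro: integrable_continuous_on_Icc_comp)+
    show "f (g \<omega>) \<le> f (h \<omega>)" if "\<omega> \<in> space \<Omega>" for \<omega>
      using f g(2)[OF that] h(2)[OF that] assms(4)[OF that] by (auto elim: mono_onD)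
  qed
  then show "(\<integral>t. f t \<partial>\<mu>) \<le> (\<integral>t. f t \<partial>\<nu>)"
    using g(3) h(3) f by simp
qed

lemma limitin_law_if_AE_tendsto:
  assumes "prob_space \<Omega>" "\<And>n. G n \<in> borel_measurable \<Omega>"
    and "\<And>n \<omega>. \<omega> \<in> space \<Omega> \<Longrightarrow> G n \<omega> \<in> {a..b}"
    and "represents a b \<Omega> g \<mu>" "\<mu> \<in> prob_measures_on a b"
    and "AE \<omega> in \<Omega>. (\<lambda>n. G n \<omega>) \<longlonglongrightarrow> g \<omega>"
  shows "limitin (weak_star_topology a b) (\<lambda>n. law a b \<Omega> (G n)) \<mu> sequentially"
proof (rule limitin_weak_star_topologyI[OF assms(5)])
  show "law a b \<Omega> (G n) \<in> prob_measures_on a b" for n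
    by (rule law_in_prob_measures_on[OF assms(1,2)]) (rule assms(3))
  have "represents a b \<Omega> (G n) (law a b \<Omega> (G n))" for n
    by (rule represents_law[OF assms(1,2)]) (rule assms(3))
  note G = representsD[OF this] and g = representsD[OF assms(4)]
  fix f :: "real \<Rightarrow> real" assume f: "continuous_on {a..b} f"
  obtain K where K: "\<And>x. x \<in> {a..b} \<Longrightarrow> \<bar>f x\<bar> \<le> K"
    using bounded_continuous_on_Icc[OF f] by blast
  interpret prob_space \<Omega> by fact
  have "(\<lambda>n. \<integral>\<omega>. f (G n \<omega>) \<partial>\<Omega>) \<longlonglongrightarrow> (\<integral>\<omega>. f (g \<omega>) \<partial>\<Omega>)"
  proof (rule integral_dominated_convergence[where w="\<lambda>_. K"])
    show "(\<lambda>\<omega>. f (g \<omega>)) \<in> borel_measurable \<Omega>"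
      "\<And>n. (\<lambda>\<omega>. f (G n \<omega>)) \<in> borel_measurable \<Omega>"
      using g(1,2) G(1,2) f by (blast intro: borel_measurable_continuous_on_Icc_comp)+
    show "AE \<omega> in \<Omega>. norm (f (G n \<omega>)) \<le> K" for n
      using K G(2) by (intro AE_I2) auto
    show "AE \<omega> in \<Omega>. (\<lambda>n. f (G n \<omega>)) \<longlonglongrightarrow> f (g \<omega>)"
      using assms(6) AE_space
    proof eventually_elim
      case (elim \<omega>)
      then show ?case
        by (intro continuous_on_tendsto_compose[OF f]) (use g(2) G(2) in auto)
    qed
  qed simp
  then show "(\<lambda>n. \<integral>t. f t \<partial>law a b \<Omega> (G n)) \<longlonglongrightarrow> (\<integral>t. f t \<partial>\<mu>)"
    using G(3)[OF f] g(3)[OF f] by simp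
qed

(* Y has law \<mu>, so it lies in [a,b] only almost surely; clamping repairs the null set. *)
lemma represents_clamp:
  assumes "\<mu> \<in> prob_measures_on a b" "a \<le> b" "Y \<in> borel_measurable \<Omega>"
    and "distr \<Omega> borel Y = distr \<mu> borel (\<lambda>x. x)"
  shows "represents a b \<Omega> (\<lambda>\<omega>. max a (min b (Y \<omega>))) \<mu>"
  unfolding represents_def
proof (intro conjI ballI allI impI)
  show "(\<lambda>\<omega>. max a (min b (Y \<omega>))) \<in> borel_measurable \<Omega>"
    using assms(3) by measurable
  show "max a (min b (Y \<omega>)) \<in> {a..b}" for \<omega>
    using assms(2) by auto
  fix f :: "real \<Rightarrow> real" assume f: "continuous_on {a..b} f"
  have "continuous_on UNIV (\<lambda>x. f (max a (min b x)))"
    using assms(2) by (intro continuous_on_compose2[OF f] continuous_intros) auto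
  then have fm: "(\<lambda>x. f (max a (min b x))) \<in> borel_measurable borel"
    by (rule borel_measurable_continuous_onI)
  have "(\<integral>t. f t \<partial>\<mu>) = (\<integral>t. f (max a (min b t)) \<partial>\<mu>)"
    by (rule Bochner_Integration.integral_cong) (auto simp: space_prob_measures_on[OF assms(1)])
  also have "\<dots> = (\<integral>t. f (max a (min b t)) \<partial>distr \<mu> borel (\<lambda>x. x))"
    using integral_distr_prob_measures_on[OF assms(1) fm] by simp
  also have "\<dots> = (\<integral>\<omega>. f (max a (min b (Y \<omega>))) \<partial>\<Omega>)"
    unfolding assms(4)[symmetric] by (rule integral_distr[OF assms(3) fm])
  finally show "(\<integral>t. f t \<partial>\<mu>) = (\<integral>\<omega>. f (max a (min b (Y \<omega>))) \<partial>\<Omega>)" .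
qed

lemma weak_star_skorohod:
  assumes "a \<le> b" "\<And>n. \<mu>s n \<in> prob_measures_on a b" "\<mu> \<in> prob_measures_on a b"
    and "limitin (weak_star_topology a b) \<mu>s \<mu> sequentially"
  obtains \<Omega> :: "real measure" and Z Z'
  where "prob_space \<Omega>" "\<And>n. represents a b \<Omega> (Z n) (\<mu>s n)" "represents a b \<Omega> Z' \<mu>"
    and "\<And>n \<omega>. Z n \<omega> \<in> {a..b}" "\<And>\<omega>. \<omega> \<in> space \<Omega> \<Longrightarrow> (\<lambda>n. Z n \<omega>) \<longlonglongrightarrow> Z' \<omega>"
proof -
  define Ms where "Ms n = distr (\<mu>s n) borel (\<lambda>x. x)" for n
  define M where "M = distr \<mu> borel (\<lambda>x. x)"
  have Ms: "real_distribution (Ms n)" for n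
    unfolding Ms_def by (rule real_distribution_prob_measures_on[OF assms(2)])
  have M: "real_distribution M"
    unfolding M_def by (rule real_distribution_prob_measures_on[OF assms(3)])
  have "weak_conv_m Ms M"
  proof (rule integral_bdd_continuous_conv_imp_weak_conv[OF Ms M])
    fix f :: "real \<Rightarrow> real" assume "\<And>x. isCont f x"
    then have "continuous_on UNIV f"
      by (simp add: continuous_at_imp_continuous_on)
    then have "f \<in> borel_measurable borel" "continuous_on {a..b} f"
      by (auto intro: borel_measurable_continuous_onI continuous_on_subset)
    then show "(\<lambda>n. integral\<^sup>L (Ms n) f) \<longlonglongrightarrow> integral\<^sup>L M f"
      using limitin_weak_star_topologyD[OF assms(4)]
        integral_distr_prob_measures_on[OF assms(2)] integral_distr_prob_measures_on[OF assms(3)]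
      by (simp add: Ms_def M_def)
  qed
  from Skorohod[OF Ms M this] obtain \<Omega> :: "real measure" and Ys Y where \<Omega>: "prob_space \<Omega>"
    and Ys: "\<And>n. Ys n \<in> borel_measurable \<Omega>" "\<And>n. distr \<Omega> borel (Ys n) = Ms n"
    and Y: "Y \<in> measurable \<Omega> lborel" "distr \<Omega> borel Y = M"
    and lim: "\<And>\<omega>. \<omega> \<in> space \<Omega> \<Longrightarrow> (\<lambda>n. Ys n \<omega>) \<longlonglongrightarrow> Y \<omega>"
    by blast
  show ?thesis
  proof (rule that[OF \<Omega>])
    show "represents a b \<Omega> (\<lambda>\<omega>. max a (min b (Ys n \<omega>))) (\<mu>s n)" for n
      using Ys unfolding Ms_def by (intro represents_clamp assms(1,2)) auto
    show "represents a b \<Omega> (\<lambda>\<omega>. max a (min b (Y \<omega>))) \<mu>"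
      using Y unfolding M_def by (intro represents_clamp assms(1,3)) auto
    show "max a (min b (Ys n \<omega>)) \<in> {a..b}" for n \<omega>
      using assms(1) by auto
    show "(\<lambda>n. max a (min b (Ys n \<omega>))) \<longlonglongrightarrow> max a (min b (Y \<omega>))" if "\<omega> \<in> space \<Omega>" for \<omega>
      using lim[OF that] by (intro tendsto_intros)
  qed
qed

lemma squeezing_sequences_from_coupling:
  assumes "prob_space \<Omega>" "\<And>n. represents a b \<Omega> (Z n) (\<mu>s n)"
    and "represents a b \<Omega> Z' \<mu>" "\<mu> \<in> prob_measures_on a b" "\<And>n \<omega>. Z n \<omega> \<in> {a..b}"
    and "\<And>\<omega>. \<omega> \<in> space \<Omega> \<Longrightarrow> (\<lambda>n. Z n \<omega>) \<longlonglongrightarrow> Z' \<omega>"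
  defines "lo n \<equiv> law a b \<Omega> (\<lambda>\<omega>. INF m\<in>{n..}. Z m \<omega>)"
    and "hi n \<equiv> law a b \<Omega> (\<lambda>\<omega>. SUP m\<in>{n..}. Z m \<omega>)"
  shows "lo n \<in> prob_measures_on a b" "hi n \<in> prob_measures_on a b"
    and "fosd_le a b (lo n) (lo (Suc n))" "fosd_le a b (hi (Suc n)) (hi n)"
    and "fosd_le a b (lo n) (\<mu>s n)" "fosd_le a b (\<mu>s n) (hi n)"
    and "limitin (weak_star_topology a b) lo \<mu> sequentially"
    and "limitin (weak_star_topology a b) hi \<mu> sequentially"
proof -
  define L where "L n \<omega> = (INF m\<in>{n..}. Z m \<omega>)" for n \<omega>
  define H where "H n \<omega> = (SUP m\<in>{n..}. Z m \<omega>)" for n \<omega>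
  have inf: "incseq (\<lambda>n. L n \<omega>)" "L n \<omega> \<le> Z n \<omega>" "(\<lambda>n. L n \<omega>) \<longlonglongrightarrow> Z' \<omega>"
    and sup: "decseq (\<lambda>n. H n \<omega>)" "Z n \<omega> \<le> H n \<omega>" "(\<lambda>n. H n \<omega>) \<longlonglongrightarrow> Z' \<omega>"
    if "\<omega> \<in> space \<Omega>" for n \<omega>
    unfolding L_def H_def
    using tail_INF_squeeze[OF assms(6)[OF that]] tail_SUP_squeeze[OF assms(6)[OF that]] by auto
  have "a \<le> L n \<omega>" "H n \<omega> \<le> b" for n \<omega>
    unfolding L_def H_def using assms(5) by (auto intro!: cINF_greatest cSUP_least)
  then have L_range: "L n \<omega> \<in> {a..b}" and H_range: "H n \<omega> \<in> {a..b}"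
    if "\<omega> \<in> space \<Omega>" for n \<omega>
    using assms(5)[of n \<omega>] inf(2)[OF that, of n] sup(2)[OF that, of n] by auto
  have "bdd_above ((\<lambda>m. Z m \<omega>) ` {n..})" for n \<omega>
    using assms(5) by (intro bdd_aboveI[of _ b]) auto
  then have L_meas: "L n \<in> borel_measurable \<Omega>" and H_meas: "H n \<in> borel_measurable \<Omega>" for n
    unfolding L_def H_def using representsD(1)[OF assms(2)]
    by (auto intro: borel_measurable_cINF_real borel_measurable_cSUP)
  have lo: "represents a b \<Omega> (L n) (lo n)" "lo n \<in> prob_measures_on a b"
    and hi: "represents a b \<Omega> (H n) (hi n)" "hi n \<in> prob_measures_on a b" for n
    unfolding lo_def hi_def L_def[symmetric] H_def[symmetric]
    using assms(1) L_meas H_meas L_range H_range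
    by (blast intro: represents_law law_in_prob_measures_on)+
  show "lo n \<in> prob_measures_on a b" "hi n \<in> prob_measures_on a b"
    using lo(2) hi(2) .
  show "fosd_le a b (lo n) (lo (Suc n))"
    using inf(1) by (intro fosd_le_if_represents_le[OF assms(1) lo(1) lo(1)] incseq_SucD)
  show "fosd_le a b (hi (Suc n)) (hi n)"
    using sup(1) by (intro fosd_le_if_represents_le[OF assms(1) hi(1) hi(1)] decseq_SucD)
  show "fosd_le a b (lo n) (\<mu>s n)"
    by (intro fosd_le_if_represents_le[OF assms(1) lo(1) assms(2)] inf(2))
  show "fosd_le a b (\<mu>s n) (hi n)"
    by (intro fosd_le_if_represents_le[OF assms(1) assms(2) hi(1)] sup(2))
  show "limitin (weak_star_topology a b) lo \<mu> sequentially"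
    unfolding lo_def L_def[symmetric]
    by (intro limitin_law_if_AE_tendsto[OF assms(1) _ _ assms(3,4)] L_meas L_range AE_I2 inf(3))
  show "limitin (weak_star_topology a b) hi \<mu> sequentially"
    unfolding hi_def H_def[symmetric]
    by (intro limitin_law_if_AE_tendsto[OF assms(1) _ _ assms(3,4)] H_meas H_range AE_I2 sup(3))
qed

lemma squeezing_property_fosd_le:
  assumes "a \<le> b"
  shows "squeezing_property (weak_star_topology a b) (fosd_le a b)"
  unfolding squeezing_property_def topspace_weak_star_topology
proof (intro allI impI)
  fix \<mu>s \<mu>
  assume "(\<forall>n. \<mu>s n \<in> prob_measures_on a b) \<and> \<mu> \<in> prob_measures_on a b \<and>
    limitin (weak_star_topology a b) \<mu>s \<mu> sequentially"
  then have \<mu>s: "\<And>n. \<mu>s n \<in> prob_measures_on a b" and \<mu>: "\<mu> \<in> prob_measures_on a b"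
    and lim: "limitin (weak_star_topology a b) \<mu>s \<mu> sequentially"
    by auto
  obtain \<Omega> :: "real measure" and Z Z' where "prob_space \<Omega>"
    and "\<And>n. represents a b \<Omega> (Z n) (\<mu>s n)" "represents a b \<Omega> Z' \<mu>"
    and "\<And>n \<omega>. Z n \<omega> \<in> {a..b}" "\<And>\<omega>. \<omega> \<in> space \<Omega> \<Longrightarrow> (\<lambda>n. Z n \<omega>) \<longlonglongrightarrow> Z' \<omega>"
    using weak_star_skorohod[OF assms \<mu>s \<mu> lim] by blast
  note squeeze = squeezing_sequences_from_coupling[OF this(1-3) \<mu> this(4,5)]
  show "\<exists>lo hi. (\<forall>n. lo n \<in> prob_measures_on a b \<and> hi n \<in> prob_measures_on a b) \<and>
      (\<forall>n. fosd_le a b (lo n) (lo (Suc n))) \<and> (\<forall>n. fosd_le a b (hi (Suc n)) (hi n)) \<and>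
      (\<forall>n. fosd_le a b (lo n) (\<mu>s n) \<and> fosd_le a b (\<mu>s n) (hi n)) \<and>
      limitin (weak_star_topology a b) lo \<mu> sequentially \<and>
      limitin (weak_star_topology a b) hi \<mu> sequentially"
    by (intro exI[of _ "\<lambda>n. law a b \<Omega> (\<lambda>\<omega>. INF m\<in>{n..}. Z m \<omega>)"]
        exI[of _ "\<lambda>n. law a b \<Omega> (\<lambda>\<omega>. SUP m\<in>{n..}. Z m \<omega>)"] conjI allI squeeze)
qed

section \<open>Step approximations of quantile functions\<close>

abbreviation uniform01 :: "real measure"
  where "uniform01 \<equiv> restrict_space lborel {0<..<1}"

lemma prob_space_uniform01: "prob_space uniform01"
  by (auto simp: emeasure_restrict_space space_restrict_space intro!: prob_spaceI)

lemma quantile_representation: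
  assumes "\<mu> \<in> prob_measures_on a b" "a \<le> b"
  obtains Q where "represents a b uniform01 Q \<mu>" "mono Q" "\<And>t. Q t \<in> {a..b}"
proof -
  interpret cdf_distribution "distr \<mu> borel (\<lambda>x. x)"
    unfolding cdf_distribution_def by (rule real_distribution_prob_measures_on[OF assms(1)])
  define Q where "Q t = (if t \<le> 0 then a else if 1 \<le> t then b else max a (min b (I t)))" for t
  have "I \<in> borel_measurable uniform01"
    using measurable_CI measurable_cong_sets[OF sets_restrict_space_cong[OF sets_lborel] refl]
    by simp
  then have "represents a b uniform01 (\<lambda>\<omega>. max a (min b (I \<omega>))) \<mu>"
    by (rule represents_clamp[OF assms]) (rule distr_I_eq_M)
  then have "represents a b uniform01 Q \<mu>"
    by (rule represents_cong) (simp add: Q_def space_restrict_space)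
  moreover have "mono Q"
  proof
    fix s t :: real assume "s \<le> t"
    then show "Q s \<le> Q t"
      using mono_onD[OF mono_I, of s t] assms(2) by (auto simp: Q_def)
  qed
  moreover have "Q t \<in> {a..b}" for t
    using assms(2) by (simp add: Q_def)
  ultimately show ?thesis by (rule that)
qed

lemma floor_grid_bounds:
  fixes N y :: real
  assumes "0 < N"
  shows "of_int \<lfloor>N * y\<rfloor> / N \<le> y" "y \<le> of_int \<lfloor>N * y\<rfloor> / N + 1 / N"
proof -
  have "of_int \<lfloor>N * y\<rfloor> \<le> y * N" "y * N \<le> of_int \<lfloor>N * y\<rfloor> + 1"
    by (simp_all add: mult.commute)
  with assms show "of_int \<lfloor>N * y\<rfloor> / N \<le> y" "y \<le> of_int \<lfloor>N * y\<rfloor> / N + 1 / N"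
    by (simp_all only: pos_divide_le_eq pos_le_divide_eq flip: add_divide_distrib)
qed

lemma ceiling_grid_bounds:
  fixes N y :: real
  assumes "0 < N"
  shows "y \<le> of_int \<lceil>N * y\<rceil> / N" "of_int \<lceil>N * y\<rceil> / N \<le> y + 1 / N"
proof -
  have "(y + 1 / N) * N = N * y + 1"
    using assms by (simp add: field_simps)
  then have "y * N \<le> of_int \<lceil>N * y\<rceil>" "of_int \<lceil>N * y\<rceil> \<le> (y + 1 / N) * N"
    by (simp_all add: mult.commute)
  with assms show "y \<le> of_int \<lceil>N * y\<rceil> / N" "of_int \<lceil>N * y\<rceil> / N \<le> y + 1 / N"
    by (simp_all only: pos_divide_le_eq pos_le_divide_eq)
qed

lemma clamp_tendsto_grid_approximation:
  fixes Q :: "real \<Rightarrow> real"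
  assumes "isCont Q \<omega>" "Q \<omega> \<in> {a..b}"
    and "\<And>n. \<bar>t n - \<omega>\<bar> \<le> 1 / Suc n" "\<And>n. \<bar>r n - Q (t n)\<bar> \<le> 1 / Suc n"
  shows "(\<lambda>n. max a (min b (r n))) \<longlonglongrightarrow> Q \<omega>"
proof -
  have approx: "u \<longlonglongrightarrow> l" if "v \<longlonglongrightarrow> l" "\<And>n. \<bar>u n - v n\<bar> \<le> 1 / Suc n" for u v :: "nat \<Rightarrow> real" and l
  proof -
    have inv: "(\<lambda>n. 1 / real (Suc n)) \<longlonglongrightarrow> 0"
      using LIMSEQ_inverse_real_of_nat by (simp add: inverse_eq_divide)
    have "(\<lambda>n. u n - v n) \<longlonglongrightarrow> 0"
      by (rule Lim_null_comparison[OF always_eventually[OF allI] inv])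
        (use that(2) in \<open>simp only: real_norm_def\<close>)
    from tendsto_add[OF this that(1)] show ?thesis by simp
  qed
  have "t \<longlonglongrightarrow> \<omega>"
    by (rule approx[OF tendsto_const assms(3)])
  then have "r \<longlonglongrightarrow> Q \<omega>"
    by (rule approx[OF isCont_tendsto_compose[OF assms(1)] assms(4)])
  then have "(\<lambda>n. max a (min b (r n))) \<longlonglongrightarrow> max a (min b (Q \<omega>))"
    by (intro tendsto_intros)
  with assms(2) show ?thesis by simp
qed

(* On the cell [k/N, (k+1)/N) of (0,1) the step function takes the value (js ! k) / N,
   clamped to [a,b]. *)
definition step_quantile :: "real \<Rightarrow> real \<Rightarrow> nat \<Rightarrow> int list \<Rightarrow> real \<Rightarrow> real"
  where "step_quantile a b N js \<omega> = max a (min b (of_int (js ! nat \<lfloor>N * \<omega>\<rfloor>) / N))"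

definition step_measure :: "real \<Rightarrow> real \<Rightarrow> nat \<Rightarrow> int list \<Rightarrow> real measure"
  where "step_measure a b N js = law a b uniform01 (step_quantile a b N js)"

lemma borel_measurable_step_quantile: "step_quantile a b N js \<in> borel_measurable uniform01"
proof -
  have "(\<lambda>\<omega>::real. \<lfloor>N * \<omega>\<rfloor>) \<in> measurable borel (count_space UNIV)"
    by measurable
  moreover have
    "(\<lambda>k::int. max a (min b (of_int (js ! nat k) / N))) \<in> borel_measurable (count_space UNIV)"
    by simp
  ultimately have "step_quantile a b N js \<in> borel_measurable borel"
    unfolding step_quantile_def by (rule measurable_compose)
  then show ?thesis
    by (simp add: measurable_cong_sets[OF sets_lborel refl] measurable_restrict_space1)
qed

lemma
  assumes "a \<le> b"
  shows step_measure_in_prob_measures_on: "step_measure a b N js \<in> prob_measures_on a b"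
    and represents_step_measure:
      "represents a b uniform01 (step_quantile a b N js) (step_measure a b N js)"
  using law_in_prob_measures_on represents_law
    prob_space_uniform01 borel_measurable_step_quantile assms
  unfolding step_measure_def step_quantile_def by auto

lemma floor_index:
  fixes \<omega> :: real and N :: nat
  assumes "\<omega> \<in> {0<..<1}" "0 < N"
  shows "nat \<lfloor>N * \<omega>\<rfloor> < N" "real (nat \<lfloor>N * \<omega>\<rfloor>) = of_int \<lfloor>N * \<omega>\<rfloor>"
proof -
  have "0 \<le> N * \<omega>" "N * \<omega> < N"
    using assms by auto
  then show "nat \<lfloor>N * \<omega>\<rfloor> < N" "real (nat \<lfloor>N * \<omega>\<rfloor>) = of_int \<lfloor>N * \<omega>\<rfloor>"
    by (simp_all add: nat_less_iff floor_less_iff)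
qed

lemma step_quantile_map_upt:
  fixes \<omega> :: real and N :: nat
  assumes "\<omega> \<in> {0<..<1}" "0 < N"
  shows "step_quantile a b N (map g [0..<N]) \<omega> =
    max a (min b (of_int (g (nat \<lfloor>N * \<omega>\<rfloor>)) / N))"
  using floor_index(1)[OF assms] by (simp add: step_quantile_def)

lemma step_quantiles_below:
  assumes "mono Q" "\<And>t. Q t \<in> {a..b}"
  obtains js where "\<And>n \<omega>. \<omega> \<in> {0<..<1} \<Longrightarrow> step_quantile a b (Suc n) (js n) \<omega> \<le> Q \<omega>"
    and "\<And>\<omega>. \<omega> \<in> {0<..<1} \<Longrightarrow> isCont Q \<omega> \<Longrightarrow>
      (\<lambda>n. step_quantile a b (Suc n) (js n) \<omega>) \<longlonglongrightarrow> Q \<omega>"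
proof
  define N where "N n = real (Suc n)" for n
  define t where "t n \<omega> = of_int \<lfloor>N n * \<omega>\<rfloor> / N n" for n \<omega>
  define r where "r n \<omega> = of_int \<lfloor>N n * Q (t n \<omega>)\<rfloor> / N n" for n \<omega>
  let ?js = "\<lambda>n. map (\<lambda>k. \<lfloor>N n * Q (real k / N n)\<rfloor>) [0..<Suc n]"
  have N: "0 < N n" for n
    by (simp add: N_def)
  have step: "step_quantile a b (Suc n) (?js n) \<omega> = max a (min b (r n \<omega>))"
    if "\<omega> \<in> {0<..<1}" for n \<omega>
    by (simp only: step_quantile_map_upt[OF that zero_less_Suc]
        floor_index(2)[OF that zero_less_Suc]) (simp add: r_def t_def N_def)
  have t: "t n \<omega> \<le> \<omega>" "\<bar>t n \<omega> - \<omega>\<bar> \<le> 1 / Suc n" for n \<omega>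
    using floor_grid_bounds[OF N[of n], of \<omega>] by (auto simp: t_def N_def)
  have r: "r n \<omega> \<le> Q (t n \<omega>)" "\<bar>r n \<omega> - Q (t n \<omega>)\<bar> \<le> 1 / Suc n" for n \<omega>
    using floor_grid_bounds[OF N[of n], of "Q (t n \<omega>)"] by (auto simp: r_def N_def)
  show "step_quantile a b (Suc n) (?js n) \<omega> \<le> Q \<omega>" if "\<omega> \<in> {0<..<1}" for n \<omega>
  proof -
    have "r n \<omega> \<le> Q \<omega>"
      using r(1) monoD[OF assms(1) t(1)] by (rule order_trans)
    then show ?thesis
      unfolding step[OF that] using assms(2)[of \<omega>] by simp
  qed
  show "(\<lambda>n. step_quantile a b (Suc n) (?js n) \<omega>) \<longlonglongrightarrow> Q \<omega>"
    if "\<omega> \<in> {0<..<1}" "isCont Q \<omega>" for \<omega>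
    unfolding step[OF that(1)]
    by (rule clamp_tendsto_grid_approximation[OF that(2) assms(2) t(2) r(2)])
qed

lemma step_quantiles_above:
  assumes "mono Q" "\<And>t. Q t \<in> {a..b}"
  obtains js where "\<And>n \<omega>. \<omega> \<in> {0<..<1} \<Longrightarrow> Q \<omega> \<le> step_quantile a b (Suc n) (js n) \<omega>"
    and "\<And>\<omega>. \<omega> \<in> {0<..<1} \<Longrightarrow> isCont Q \<omega> \<Longrightarrow>
      (\<lambda>n. step_quantile a b (Suc n) (js n) \<omega>) \<longlonglongrightarrow> Q \<omega>"
proof
  define N where "N n = real (Suc n)" for n
  define t where "t n \<omega> = of_int \<lfloor>N n * \<omega>\<rfloor> / N n + 1 / N n" for n \<omega>
  define r where "r n \<omega> = of_int \<lceil>N n * Q (t n \<omega>)\<rceil> / N n" for n \<omega>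
  let ?js = "\<lambda>n. map (\<lambda>k. \<lceil>N n * Q (real k / N n + 1 / N n)\<rceil>) [0..<Suc n]"
  have N: "0 < N n" for n
    by (simp add: N_def)
  have step: "step_quantile a b (Suc n) (?js n) \<omega> = max a (min b (r n \<omega>))"
    if "\<omega> \<in> {0<..<1}" for n \<omega>
    by (simp only: step_quantile_map_upt[OF that zero_less_Suc]
        floor_index(2)[OF that zero_less_Suc]) (simp add: r_def t_def N_def)
  have t: "\<omega> \<le> t n \<omega>" "\<bar>t n \<omega> - \<omega>\<bar> \<le> 1 / Suc n" for n \<omega>
    using floor_grid_bounds[OF N[of n], of \<omega>] by (auto simp: t_def N_def)
  have r: "Q (t n \<omega>) \<le> r n \<omega>" "\<bar>r n \<omega> - Q (t n \<omega>)\<bar> \<le> 1 / Suc n" for n \<omega>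
    using ceiling_grid_bounds[OF N[of n], of "Q (t n \<omega>)"] by (auto simp: r_def N_def)
  show "Q \<omega> \<le> step_quantile a b (Suc n) (?js n) \<omega>" if "\<omega> \<in> {0<..<1}" for n \<omega>
  proof -
    have "Q \<omega> \<le> r n \<omega>"
      using monoD[OF assms(1) t(1)] r(1) by (rule order_trans)
    then show ?thesis
      unfolding step[OF that] using assms(2)[of \<omega>] by simp
  qed
  show "(\<lambda>n. step_quantile a b (Suc n) (?js n) \<omega>) \<longlonglongrightarrow> Q \<omega>"
    if "\<omega> \<in> {0<..<1}" "isCont Q \<omega>" for \<omega>
    unfolding step[OF that(1)]
    by (rule clamp_tendsto_grid_approximation[OF that(2) assms(2) t(2) r(2)])
qed

lemma step_measure_in_open:
  assumes "a \<le> b" "\<mu> \<in> prob_measures_on a b" "represents a b uniform01 Q \<mu>" "mono Q"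
    and "openin (weak_star_topology a b) V" "\<mu> \<in> V"
    and "\<And>\<omega>. \<omega> \<in> {0<..<1} \<Longrightarrow> isCont Q \<omega> \<Longrightarrow>
      (\<lambda>n. step_quantile a b (Suc n) (js n) \<omega>) \<longlonglongrightarrow> Q \<omega>"
  obtains n where "step_measure a b (Suc n) (js n) \<in> V"
proof -
  let ?D = "{\<omega> \<in> {0<..<1}. \<not> isCont Q \<omega>}"
  have "countable ?D"
    using mono_ctble_discont[OF assms(4)] by (rule countable_subset[rotated]) auto
  then have "?D \<in> null_sets uniform01"
    by (subst null_sets_restrict_space) (auto intro: countable_imp_null_set_lborel)
  then have "AE \<omega> in uniform01. (\<lambda>n. step_quantile a b (Suc n) (js n) \<omega>) \<longlonglongrightarrow> Q \<omega>"
    by (rule AE_I') (use assms(7) in \<open>auto simp: space_restrict_space\<close>)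
  then have "limitin (weak_star_topology a b) (\<lambda>n. step_measure a b (Suc n) (js n)) \<mu> sequentially"
    unfolding step_measure_def using assms(1)
    by (intro limitin_law_if_AE_tendsto[OF prob_space_uniform01 borel_measurable_step_quantile _
          assms(3,2)]) (auto simp: step_quantile_def)
  then have "eventually (\<lambda>n. step_measure a b (Suc n) (js n) \<in> V) sequentially"
    using assms(5,6) unfolding limitin_def by blast
  then show ?thesis
    using that by (auto simp: eventually_sequentially)
qed

lemma step_measures_order_dense:
  assumes "a \<le> b" "\<mu> \<in> prob_measures_on a b" "openin (weak_star_topology a b) V" "\<mu> \<in> V"
  shows "\<exists>\<nu> \<in> range (case_prod (step_measure a b)) \<inter> V. fosd_le a b \<nu> \<mu>"
    and "\<exists>\<nu> \<in> range (case_prod (step_measure a b)) \<inter> V. fosd_le a b \<mu> \<nu>"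
proof -
  obtain Q where Q: "represents a b uniform01 Q \<mu>" "mono Q" "\<And>t. Q t \<in> {a..b}"
    using quantile_representation[OF assms(2,1)] by blast
  note in_V = step_measure_in_open[OF assms(1,2) Q(1,2) assms(3,4)]
  have represents:
    "represents a b uniform01 (step_quantile a b N js) (step_measure a b N js)" for N js
    using assms(1) by (rule represents_step_measure)
  obtain js where below: "\<And>n \<omega>. \<omega> \<in> {0<..<1} \<Longrightarrow> step_quantile a b (Suc n) (js n) \<omega> \<le> Q \<omega>"
    and lim: "\<And>\<omega>. \<omega> \<in> {0<..<1} \<Longrightarrow> isCont Q \<omega> \<Longrightarrow>
      (\<lambda>n. step_quantile a b (Suc n) (js n) \<omega>) \<longlonglongrightarrow> Q \<omega>"
    using step_quantiles_below[OF Q(2,3)] by blast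
  obtain n where "step_measure a b (Suc n) (js n) \<in> V"
    using in_V[OF lim] .
  moreover have "fosd_le a b (step_measure a b (Suc n) (js n)) \<mu>"
    using below by (intro fosd_le_if_represents_le[OF prob_space_uniform01 represents Q(1)])
      (simp add: space_restrict_space)
  ultimately show "\<exists>\<nu> \<in> range (case_prod (step_measure a b)) \<inter> V. fosd_le a b \<nu> \<mu>"
    by (intro bexI[of _ "step_measure a b (Suc n) (js n)"]) auto
  obtain js' where above: "\<And>n \<omega>. \<omega> \<in> {0<..<1} \<Longrightarrow> Q \<omega> \<le> step_quantile a b (Suc n) (js' n) \<omega>"
    and lim': "\<And>\<omega>. \<omega> \<in> {0<..<1} \<Longrightarrow> isCont Q \<omega> \<Longrightarrow>
      (\<lambda>n. step_quantile a b (Suc n) (js' n) \<omega>) \<longlonglongrightarrow> Q \<omega>"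
    using step_quantiles_above[OF Q(2,3)] by blast
  obtain n' where "step_measure a b (Suc n') (js' n') \<in> V"
    using in_V[OF lim'] .
  moreover have "fosd_le a b \<mu> (step_measure a b (Suc n') (js' n'))"
    using above by (intro fosd_le_if_represents_le[OF prob_space_uniform01 Q(1) represents])
      (simp add: space_restrict_space)
  ultimately show "\<exists>\<nu> \<in> range (case_prod (step_measure a b)) \<inter> V. fosd_le a b \<mu> \<nu>"
    by (intro bexI[of _ "step_measure a b (Suc n') (js' n')"]) auto
qed

lemma countable_order_property_fosd_le:
  assumes "a \<le> b"
  shows "\<exists>Bs. sequence_of_experiments (weak_star_topology a b) Bs \<and>
           countable_order_property (weak_star_topology a b) (fosd_le a b) Bs"
  by (rule experiments_from_countable_order_dense[of "range (case_prod (step_measure a b))"])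
    (use assms in \<open>auto simp: step_measure_in_prob_measures_on step_measures_order_dense\<close>)

theorem proposition3:
  fixes a b :: real
  assumes "a < b"
  shows "(squeezing_property (euclidean :: (real^'n) topology) coord_le \<and>
          (\<exists>Bs. sequence_of_experiments (euclidean :: (real^'n) topology) Bs \<and>
                countable_order_property euclidean coord_le Bs))
       \<and> (squeezing_property (weak_star_topology a b) (fosd_le a b) \<and>
          (\<exists>Bs. sequence_of_experiments (weak_star_topology a b) Bs \<and>
                countable_order_property (weak_star_topology a b) (fosd_le a b) Bs))"
proof -
  have "a \<le> b"
    using assms by simp
  then show ?thesis
    using squeezing_property_coord_le countable_order_property_coord_le
      squeezing_property_fosd_le countable_order_property_fosd_le by blast
qed

end
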